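(* Let $n\geq 3$ and let $C_n$ be the cycle with vertices $v_1,\dots,v_n$, where $v_i\sim v_{(i+1)\bmod n}$. Fix a pair $\{l,j\}\subset\{1,2,3\}$ with $l\neq j$. Then for every 0-cell $\eta\in\mathrm{Hom}(C_n,K_3)$, every vertex $v_i$ of $C_n$ is a return point of exactly one of $\eta$ and $\eta_{\{l,j\}}$. Consequently $r(\eta_{\{l,j\}})=n-r(\eta)$.
   Context: $K_3$ has vertex set $\{1,2,3\}$, viewed as the cycle $C_3$ with $a\sim (a+1)\bmod 3$. A 0-cell of $\mathrm{Hom}(C_n,K_3)$ is a graph homomorphism $\eta:V(C_n)\to\{1,2,3\}$ (adjacent vertices receive distinct values). A vertex $v_i$ is a return point of $\eta$ if $\eta(v_{i+1})-\eta(v_i)\equiv -1 \pmod 3$ (indices of $v$ taken mod $n$); $r(\eta)$, the return number, is the number of return points of $\eta$. For a 0-cell $\eta$ and a pair $\{l,j\}$, the interchanged 0-cell $\eta_{\{l,j\}}$ is defined by $\eta_{\{l,j\}}^{-1}(l)=\eta^{-1}(j)$, $\eta_{\{l,j\}}^{-1}(j)=\eta^{-1}(l)$, and $\eta_{\{l,j\}}^{-1}(i)=\eta^{-1}(i)$ for $i\notin\{l,j\}$. *)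

theory Defs
  imports Main
begin

text \<open>Vertices of C_n are indexed 0..n-1 (index i stands for v_(i+1)); vertex i is adjacent
  to (i+1) mod n. K_3 has vertex set {1,2,3}.\<close>

definition cycle_hom :: "nat \<Rightarrow> (nat \<Rightarrow> nat) \<Rightarrow> bool" where
  "cycle_hom n \<eta> \<longleftrightarrow> (\<forall>i<n. \<eta> i \<in> {1,2,3}) \<and> (\<forall>i<n. \<eta> i \<noteq> \<eta> ((i + 1) mod n))"

definition return_point :: "nat \<Rightarrow> (nat \<Rightarrow> nat) \<Rightarrow> nat \<Rightarrow> bool" where
  "return_point n \<eta> i \<longleftrightarrow> (int (\<eta> ((i + 1) mod n)) - int (\<eta> i)) mod 3 = (-1) mod 3"

definition return_number :: "nat \<Rightarrow> (nat \<Rightarrow> nat) \<Rightarrow> nat" where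
  "return_number n \<eta> = card {i. i < n \<and> return_point n \<eta> i}"

definition interchange :: "nat \<Rightarrow> nat \<Rightarrow> (nat \<Rightarrow> nat) \<Rightarrow> (nat \<Rightarrow> nat)" where
  "interchange l j \<eta> = (\<lambda>v. if \<eta> v = l then j else if \<eta> v = j then l else \<eta> v)"

end

theory Submission
  imports Defs
begin

text \<open>A transposition of the colours 1, 2, 3 reverses the cyclic orientation of K_3, so it
  turns every step of size +1 (mod 3) along an edge of C_n into a step of size -1 and
  vice versa.\<close>

lemma transposition_reverses_orientation:
  fixes a b l j :: nat
  assumes "a \<in> {1,2,3}" "b \<in> {1,2,3}" "a \<noteq> b"
    and "l \<in> {1,2,3}" "j \<in> {1,2,3}" "l \<noteq> j"
  defines "\<sigma> x \<equiv> if x = l then j else if x = j then l else x"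
  shows "(int b - int a) mod 3 = (-1) mod 3 \<longleftrightarrow> \<not> (int (\<sigma> b) - int (\<sigma> a)) mod 3 = (-1) mod 3"
  using assms by auto

lemma return_point_interchange:
  assumes "cycle_hom n \<eta>" and "i < n"
    and "l \<in> {1,2,3}" "j \<in> {1,2,3}" "l \<noteq> j"
  shows "return_point n (interchange l j \<eta>) i \<longleftrightarrow> \<not> return_point n \<eta> i"
proof -
  have "(i + 1) mod n < n"
    using \<open>i < n\<close> by simp
  then have "\<eta> i \<in> {1,2,3}" "\<eta> ((i + 1) mod n) \<in> {1,2,3}" "\<eta> i \<noteq> \<eta> ((i + 1) mod n)"
    using assms(1,2) unfolding cycle_hom_def by auto
  from transposition_reverses_orientation[OF this assms(3-5)]
  show ?thesis
    unfolding return_point_def interchange_def by auto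
qed

lemma card_lessThan_complement:
  assumes "\<And>i. i < n \<Longrightarrow> P i \<longleftrightarrow> \<not> Q i"
  shows "card {i. i < n \<and> P i} = n - card {i. i < n \<and> Q i}"
proof -
  have "{i. i < n \<and> P i} = {..<n} - {i. i < n \<and> Q i}"
    using assms by auto
  moreover have "card ({..<n} - {i. i < n \<and> Q i}) = n - card {i. i < n \<and> Q i}"
    by (subst card_Diff_subset) auto
  ultimately show ?thesis
    by simp
qed

theorem lemma4p6:
  fixes n l j :: nat and \<eta> :: "nat \<Rightarrow> nat"
  assumes "n \<ge> 3"
    and "l \<in> {1,2,3}" and "j \<in> {1,2,3}" and "l \<noteq> j"
    and "cycle_hom n \<eta>"
  shows "(\<forall>i<n. return_point n \<eta> i \<noteq> return_point n (interchange l j \<eta>) i)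
         \<and> return_number n (interchange l j \<eta>) = n - return_number n \<eta>"
proof -
  have flip: "\<And>i. i < n \<Longrightarrow> return_point n (interchange l j \<eta>) i \<longleftrightarrow> \<not> return_point n \<eta> i"
    using return_point_interchange assms(2-5) by blast
  then have "return_number n (interchange l j \<eta>) = n - return_number n \<eta>"
    unfolding return_number_def by (rule card_lessThan_complement)
  with flip show ?thesis
    by auto
qed

end
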